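(* Let $m\ge 2$ be an integer and let $H$ be a finite simple connected graph of order at least $2$ with $n(H) \le m$. The Cartesian product $K_m \,\square\, H$ is well-dominated if and only if one of the following holds: (1) $m=2$ and $H$ is isomorphic to $K_2$; (2) $m=3$ and $H$ is isomorphic to $K_3$ or to the path $P_3$; (3) $m \ge 4$ and $H$ is isomorphic to $K_m$.
   Context: $n(H)$ is the order of $H$. A graph is well-dominated if every minimal (with respect to inclusion) dominating set is a minimum dominating set. The Cartesian product $G\,\square\, H$ has vertex set $V(G)\times V(H)$, with $(g_1,h_1)$ adjacent to $(g_2,h_2)$ iff either ($g_1=g_2$ and $h_1h_2\in E(H)$) or ($h_1=h_2$ and $g_1g_2\in E(G)$). *)

theory Defs
  imports Main
begin

definition simple_graph :: "'a set \<Rightarrow> ('a \<Rightarrow> 'a \<Rightarrow> bool) \<Rightarrow> bool" where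
  "simple_graph V E \<longleftrightarrow> finite V \<and> (\<forall>x y. E x y \<longrightarrow> x \<in> V \<and> y \<in> V)
     \<and> (\<forall>x y. E x y \<longrightarrow> E y x) \<and> (\<forall>x. \<not> E x x)"

definition connected_graph :: "'a set \<Rightarrow> ('a \<Rightarrow> 'a \<Rightarrow> bool) \<Rightarrow> bool" where
  "connected_graph V E \<longleftrightarrow> (\<forall>x\<in>V. \<forall>y\<in>V. E\<^sup>*\<^sup>* x y)"

definition dominating_set :: "'a set \<Rightarrow> ('a \<Rightarrow> 'a \<Rightarrow> bool) \<Rightarrow> 'a set \<Rightarrow> bool" where
  "dominating_set V E D \<longleftrightarrow> D \<subseteq> V \<and> (\<forall>v\<in>V. v \<in> D \<or> (\<exists>u\<in>D. E u v))"

definition minimal_dominating_set :: "'a set \<Rightarrow> ('a \<Rightarrow> 'a \<Rightarrow> bool) \<Rightarrow> 'a set \<Rightarrow> bool" where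
  "minimal_dominating_set V E D \<longleftrightarrow> dominating_set V E D \<and>
     (\<forall>D'. D' \<subset> D \<longrightarrow> \<not> dominating_set V E D')"

definition minimum_dominating_set :: "'a set \<Rightarrow> ('a \<Rightarrow> 'a \<Rightarrow> bool) \<Rightarrow> 'a set \<Rightarrow> bool" where
  "minimum_dominating_set V E D \<longleftrightarrow> dominating_set V E D \<and>
     (\<forall>D'. dominating_set V E D' \<longrightarrow> card D \<le> card D')"

definition well_dominated :: "'a set \<Rightarrow> ('a \<Rightarrow> 'a \<Rightarrow> bool) \<Rightarrow> bool" where
  "well_dominated V E \<longleftrightarrow> (\<forall>D. minimal_dominating_set V E D \<longrightarrow> minimum_dominating_set V E D)"

definition graph_iso :: "'a set \<Rightarrow> ('a \<Rightarrow> 'a \<Rightarrow> bool) \<Rightarrow> 'b set \<Rightarrow> ('b \<Rightarrow> 'b \<Rightarrow> bool) \<Rightarrow> bool" where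
  "graph_iso V E V' E' \<longleftrightarrow> (\<exists>f. bij_betw f V V' \<and> (\<forall>x\<in>V. \<forall>y\<in>V. E x y \<longleftrightarrow> E' (f x) (f y)))"

definition K_verts :: "nat \<Rightarrow> nat set" where "K_verts m = {..<m}"
definition K_adj :: "nat \<Rightarrow> nat \<Rightarrow> nat \<Rightarrow> bool" where
  "K_adj m i j \<longleftrightarrow> i < m \<and> j < m \<and> i \<noteq> j"

definition P3_verts :: "nat set" where "P3_verts = {0, 1, 2}"
definition P3_adj :: "nat \<Rightarrow> nat \<Rightarrow> bool" where
  "P3_adj i j \<longleftrightarrow> (i = 0 \<and> j = 1) \<or> (i = 1 \<and> j = 0) \<or> (i = 1 \<and> j = 2) \<or> (i = 2 \<and> j = 1)"

definition cart_verts :: "'a set \<Rightarrow> 'b set \<Rightarrow> ('a \<times> 'b) set" where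
  "cart_verts VG VH = VG \<times> VH"

definition cart_adj :: "'a set \<Rightarrow> ('a \<Rightarrow> 'a \<Rightarrow> bool) \<Rightarrow> 'b set \<Rightarrow> ('b \<Rightarrow> 'b \<Rightarrow> bool)
    \<Rightarrow> 'a \<times> 'b \<Rightarrow> 'a \<times> 'b \<Rightarrow> bool" where
  "cart_adj VG EG VH EH p q \<longleftrightarrow>
     (fst p = fst q \<and> fst p \<in> VG \<and> EH (snd p) (snd q)) \<or>
     (snd p = snd q \<and> snd p \<in> VH \<and> EG (fst p) (fst q))"

end

theory Submission
  imports Defs
begin

text \<open>Write n for the order of H. A single layer of K_m x H dominates it, and a dominating
  set either meets all n columns or misses one, in which case it meets all m >= n rows; so the
  domination number is n, and well-domination means that no minimal dominating set has more
  than n vertices.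

  If K_m x H is well-dominated, take a dominating set S of H in which every vertex has an
  external private neighbour (Bollobas-Cockayne). Then the m copies of S form a minimal dominating
  set of size m |S|, which forces n = m and |S| = 1: H has a universal vertex u. If H is not
  complete, it has non-adjacent vertices a, b; for n >= 4 the vertices (0, a), (0, b) together with
  one vertex of V - {a, b, u} in each further row, covering all of V - {a, b, u}, form a minimal
  dominating set of size m + 1, and for n = 3 the graph H is P_3.

  Conversely, two vertices of a minimal dominating set in one column, or, when H is K_m or P_3 and
  some column is missed, two vertices in one row, would make one of them redundant.\<close>

definition dominated_by :: "('a \<Rightarrow> 'a \<Rightarrow> bool) \<Rightarrow> 'a set \<Rightarrow> 'a \<Rightarrow> bool" where
  "dominated_by E D v \<longleftrightarrow> v \<in> D \<or> (\<exists>u\<in>D. E u v)"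

definition private_neighbour :: "('a \<Rightarrow> 'a \<Rightarrow> bool) \<Rightarrow> 'a set \<Rightarrow> 'a \<Rightarrow> 'a \<Rightarrow> bool" where
  "private_neighbour E D p c \<longleftrightarrow> (c = p \<or> E p c) \<and> \<not> dominated_by E (D - {p}) c"

lemma dominating_set_iff_dominated_by:
  "dominating_set V E D \<longleftrightarrow> D \<subseteq> V \<and> (\<forall>v\<in>V. dominated_by E D v)"
  unfolding dominating_set_def dominated_by_def ..

lemma dominated_by_self: "v \<in> D \<Longrightarrow> dominated_by E D v"
  and dominated_by_neighbour: "u \<in> D \<Longrightarrow> E u v \<Longrightarrow> dominated_by E D v"
  unfolding dominated_by_def by blast+

lemma dominating_set_Diff_singleton_iff:
  assumes "dominating_set V E D" and "p \<in> D"
  shows "dominating_set V E (D - {p}) \<longleftrightarrow> \<not> (\<exists>c\<in>V. private_neighbour E D p c)"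
  using assms unfolding dominating_set_def private_neighbour_def dominated_by_def by blast

lemma minimal_dominating_set_iff_Diff_singleton:
  "minimal_dominating_set V E D \<longleftrightarrow>
     dominating_set V E D \<and> (\<forall>p\<in>D. \<not> dominating_set V E (D - {p}))"
proof
  assume "minimal_dominating_set V E D"
  then show "dominating_set V E D \<and> (\<forall>p\<in>D. \<not> dominating_set V E (D - {p}))"
    unfolding minimal_dominating_set_def by blast
next
  assume D: "dominating_set V E D \<and> (\<forall>p\<in>D. \<not> dominating_set V E (D - {p}))"
  have "\<not> dominating_set V E D'" if "D' \<subset> D" for D'
  proof
    assume "dominating_set V E D'"
    moreover obtain p where "p \<in> D" "D' \<subseteq> D - {p}" using \<open>D' \<subset> D\<close> by blast
    ultimately have "dominating_set V E (D - {p})"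
      using D unfolding dominating_set_def by blast
    with D \<open>p \<in> D\<close> show False by blast
  qed
  with D show "minimal_dominating_set V E D"
    unfolding minimal_dominating_set_def by blast
qed

lemma minimal_dominating_set_iff_private_neighbour:
  "minimal_dominating_set V E D \<longleftrightarrow>
     dominating_set V E D \<and> (\<forall>p\<in>D. \<exists>c\<in>V. private_neighbour E D p c)"
proof -
  have "(\<forall>p\<in>D. \<not> dominating_set V E (D - {p})) \<longleftrightarrow> (\<forall>p\<in>D. \<exists>c\<in>V. private_neighbour E D p c)"
    if "dominating_set V E D"
    using dominating_set_Diff_singleton_iff[OF that] by blast
  then show ?thesis using minimal_dominating_set_iff_Diff_singleton by blast
qed

lemma minimum_imp_minimal_dominating_set:
  assumes "finite V" and "minimum_dominating_set V E D"
  shows "minimal_dominating_set V E D"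
  unfolding minimal_dominating_set_def
proof (intro conjI allI impI)
  show "dominating_set V E D" using assms(2) unfolding minimum_dominating_set_def by blast
  then have "finite D" using assms(1) rev_finite_subset unfolding dominating_set_def by blast
  fix D' assume "D' \<subset> D"
  with \<open>finite D\<close> have "card D' < card D" by (rule psubset_card_mono)
  then have "\<not> card D \<le> card D'" by simp
  then show "\<not> dominating_set V E D'"
    using assms(2) unfolding minimum_dominating_set_def by blast
qed

lemma minimal_dominating_set_no_neighbour_in_set:
  assumes "minimal_dominating_set V E S" and "s \<in> S" and "x \<in> S"
    and "\<not> (\<exists>e\<in>V - S. private_neighbour E S s e)"
  shows "\<not> E x s \<or> x = s"
proof -
  obtain c where c: "c \<in> V" "private_neighbour E S s c"
    using assms(1,2) unfolding minimal_dominating_set_iff_private_neighbour by blast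
  have "c = s"
  proof (rule ccontr)
    assume "c \<noteq> s"
    moreover have "c \<notin> S - {s}" using c(2) unfolding private_neighbour_def dominated_by_def by blast
    ultimately have "c \<in> V - S" using c(1) by blast
    with c(2) assms(4) show False by blast
  qed
  with c(2) have "\<not> dominated_by E (S - {s}) s" unfolding private_neighbour_def by blast
  with assms(3) show ?thesis unfolding dominated_by_def by blast
qed

lemma dominating_set_swap:
  assumes "simple_graph V E" and S: "dominating_set V E S" and "s \<in> S" and "E s t"
    and no_epn: "\<not> (\<exists>e\<in>V - S. private_neighbour E S s e)"
  shows "dominating_set V E (insert t (S - {s}))"
  unfolding dominating_set_iff_dominated_by
proof (intro conjI ballI)
  have "t \<in> V" and "E t s" using assms(1) \<open>E s t\<close> unfolding simple_graph_def by blast+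
  then show "insert t (S - {s}) \<subseteq> V" using S unfolding dominating_set_def by blast
  fix w assume "w \<in> V"
  then obtain x where x: "x \<in> S" "x = w \<or> E x w"
    using S unfolding dominating_set_def by blast
  show "dominated_by E (insert t (S - {s})) w"
  proof (cases "w = s \<or> w \<in> S \<or> x \<noteq> s")
    case True
    with x \<open>E t s\<close> show ?thesis unfolding dominated_by_def by blast
  next
    case False
    then have "private_neighbour E S s w \<or> dominated_by E (S - {s}) w"
      using x unfolding private_neighbour_def by blast
    with no_epn False \<open>w \<in> V\<close> show ?thesis unfolding dominated_by_def by blast
  qed
qed

definition internal_edges :: "('a \<Rightarrow> 'a \<Rightarrow> bool) \<Rightarrow> 'a set \<Rightarrow> ('a \<times> 'a) set" where
  "internal_edges E S = {(x, y) \<in> S \<times> S. E x y}"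

lemma exchange_increases_internal_edges:
  assumes simple: "simple_graph V E" and S: "minimal_dominating_set V E S" and "s \<in> S"
    and "E s t" and no_epn: "\<not> (\<exists>e\<in>V - S. private_neighbour E S s e)"
  shows "dominating_set V E (insert t (S - {s}))"
    and "card (insert t (S - {s})) = card S"
    and "card (internal_edges E S) < card (internal_edges E (insert t (S - {s})))"
proof -
  have sym: "\<And>x y. E x y \<Longrightarrow> E y x" and "finite V" and "t \<in> V"
    using simple \<open>E s t\<close> unfolding simple_graph_def by blast+
  have S_dom: "dominating_set V E S" using S unfolding minimal_dominating_set_def by blast
  then have "finite S" using \<open>finite V\<close> rev_finite_subset unfolding dominating_set_def by blast
  have no_nb: "\<not> E x s" if "x \<in> S" for x
    using minimal_dominating_set_no_neighbour_in_set[OF S \<open>s \<in> S\<close> that no_epn]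
      simple unfolding simple_graph_def by blast
  then have "t \<notin> S" using \<open>E s t\<close> sym by blast
  with \<open>E s t\<close> \<open>t \<in> V\<close> no_epn obtain t' where t': "t' \<in> S - {s}" "E t' t"
    unfolding private_neighbour_def dominated_by_def by blast
  define S' where "S' = insert t (S - {s})"
  show "dominating_set V E (insert t (S - {s}))"
    using simple S_dom \<open>s \<in> S\<close> \<open>E s t\<close> no_epn by (rule dominating_set_swap)
  show "card (insert t (S - {s})) = card S"
    using \<open>finite S\<close> \<open>s \<in> S\<close> \<open>t \<notin> S\<close> by (metis card_Suc_Diff1 card_insert_disjoint finite_Diff DiffD1)
  have "internal_edges E S \<subset> internal_edges E S'"
  proof
    show "internal_edges E S \<subseteq> internal_edges E S'"
      using no_nb sym unfolding internal_edges_def S'_def by auto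
    have "(t', t) \<in> internal_edges E S' - internal_edges E S"
      using t' \<open>t \<notin> S\<close> unfolding internal_edges_def S'_def by auto
    then show "internal_edges E S \<noteq> internal_edges E S'" by blast
  qed
  moreover have "finite (internal_edges E S')"
    by (rule finite_subset[of _ "S' \<times> S'"]) (use \<open>finite S\<close> in \<open>auto simp: internal_edges_def S'_def\<close>)
  ultimately show "card (internal_edges E S) < card (internal_edges E (insert t (S - {s})))"
    unfolding S'_def by (intro psubset_card_mono)
qed

text \<open>Bollobas and Cockayne: a minimum dominating set spanning the most edges has the
  property, since by the exchange above a vertex without external private neighbour could be
  swapped for one of its neighbours.\<close>

lemma ex_dominating_set_external_private_neighbours:
  assumes simple: "simple_graph V E" and no_isolated: "\<forall>v\<in>V. \<exists>w. E v w"
  shows "\<exists>S. dominating_set V E S \<and> (\<forall>s\<in>S. \<exists>e\<in>V - S. private_neighbour E S s e)"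
proof -
  have fin: "finite V" using simple unfolding simple_graph_def by blast
  have "dominating_set V E V" unfolding dominating_set_def by blast
  then obtain S0 where S0: "minimum_dominating_set V E S0"
    using ex_has_least_nat[of "dominating_set V E" V card]
    unfolding minimum_dominating_set_def by blast
  define P where "P S \<longleftrightarrow> dominating_set V E S \<and> card S = card S0" for S
  have "card (internal_edges E S) < Suc (card (V \<times> V))" if "P S" for S
  proof -
    have "internal_edges E S \<subseteq> V \<times> V"
      using that unfolding P_def dominating_set_def internal_edges_def by blast
    then have "card (internal_edges E S) \<le> card (V \<times> V)" using fin by (intro card_mono) simp_all
    then show ?thesis by simp
  qed
  moreover have "P S0" using S0 unfolding P_def minimum_dominating_set_def by blast
  ultimately obtain S where "P S"
    and S_max: "\<And>S'. P S' \<Longrightarrow> card (internal_edges E S') \<le> card (internal_edges E S)"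
    using ex_has_greatest_nat[of P S0 "\<lambda>S. card (internal_edges E S)" "Suc (card (V \<times> V))"]
    by blast
  then have S: "dominating_set V E S" and "minimum_dominating_set V E S"
    using S0 unfolding P_def minimum_dominating_set_def by auto
  from fin this(2) have S_min: "minimal_dominating_set V E S"
    by (rule minimum_imp_minimal_dominating_set)
  have "\<exists>e\<in>V - S. private_neighbour E S s e" if "s \<in> S" for s
  proof (rule ccontr)
    assume no_epn: "\<not> ?thesis"
    obtain t where "E s t" using no_isolated \<open>s \<in> S\<close> S unfolding dominating_set_def by blast
    note exchange = exchange_increases_internal_edges[OF simple S_min \<open>s \<in> S\<close> this no_epn]
    from exchange(1,2) \<open>P S\<close> have "P (insert t (S - {s}))" unfolding P_def by simp
    then have "card (internal_edges E (insert t (S - {s}))) \<le> card (internal_edges E S)"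
      by (rule S_max)
    with exchange(3) show False by simp
  qed
  with S show ?thesis by blast
qed

lemma ex_image_atLeastLessThan_eq:
  assumes "finite W" and "W \<noteq> {}" and "card W < n"
  shows "\<exists>g. g ` {1..<n} = W"
proof -
  obtain h where h: "bij_betw h {1..card W} W"
    using ex_bij_betw_nat_finite_1[OF assms(1)] by blast
  have "1 \<le> card W" using assms(1,2) by (simp add: Suc_le_eq card_gt_0_iff)
  have "(\<lambda>j. h (min j (card W))) ` {1..<n} = W"
  proof
    show "(\<lambda>j. h (min j (card W))) ` {1..<n} \<subseteq> W"
      using \<open>1 \<le> card W\<close> by (auto intro!: bij_betw_apply[OF h])
    show "W \<subseteq> (\<lambda>j. h (min j (card W))) ` {1..<n}"
    proof
      fix w assume "w \<in> W"
      then obtain k where "k \<in> {1..card W}" "w = h k"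
        using bij_betw_imp_surj_on[OF h] by blast
      then show "w \<in> (\<lambda>j. h (min j (card W))) ` {1..<n}"
        using assms(3) by (intro image_eqI[of _ _ k]) auto
    qed
  qed
  then show ?thesis by blast
qed

lemma connected_graph_no_isolated_vertex:
  assumes "connected_graph V E" and "2 \<le> card V" and "v \<in> V"
  shows "\<exists>w. E v w"
proof -
  have "\<not> V \<subseteq> {v}"
  proof
    assume "V \<subseteq> {v}"
    then have "card V \<le> 1" using card_mono[of "{v}" V] by simp
    with assms(2) show False by simp
  qed
  then obtain w where "w \<in> V" "w \<noteq> v" by blast
  with assms(1,3) have "E\<^sup>*\<^sup>* v w" unfolding connected_graph_def by blast
  then show ?thesis using \<open>w \<noteq> v\<close> by (cases rule: converse_rtranclpE) auto
qed

lemma K_adj_bij_betw_iff: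
  assumes "bij_betw f V {..<n}" and "x \<in> V" and "y \<in> V"
  shows "K_adj n (f x) (f y) \<longleftrightarrow> x \<noteq> y"
  using bij_betw_apply[OF assms(1)] inj_on_eq_iff[OF bij_betw_imp_inj_on[OF assms(1)]] assms(2,3)
  unfolding K_adj_def by auto

lemma graph_iso_K_iff:
  assumes "finite V"
  shows "graph_iso V E (K_verts n) (K_adj n) \<longleftrightarrow> card V = n \<and> (\<forall>x\<in>V. \<forall>y\<in>V. E x y \<longleftrightarrow> x \<noteq> y)"
proof
  assume "graph_iso V E (K_verts n) (K_adj n)"
  then obtain f where f: "bij_betw f V {..<n}" "\<forall>x\<in>V. \<forall>y\<in>V. E x y \<longleftrightarrow> K_adj n (f x) (f y)"
    unfolding graph_iso_def K_verts_def by blast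
  then show "card V = n \<and> (\<forall>x\<in>V. \<forall>y\<in>V. E x y \<longleftrightarrow> x \<noteq> y)"
    using bij_betw_same_card[OF f(1)] by (simp add: K_adj_bij_betw_iff[OF f(1)])
next
  assume complete: "card V = n \<and> (\<forall>x\<in>V. \<forall>y\<in>V. E x y \<longleftrightarrow> x \<noteq> y)"
  then obtain f where f: "bij_betw f V {..<n}"
    using ex_bij_betw_finite_nat[OF assms] by (auto simp: atLeast0LessThan)
  moreover have "\<forall>x\<in>V. \<forall>y\<in>V. E x y \<longleftrightarrow> K_adj n (f x) (f y)"
    using complete by (simp add: K_adj_bij_betw_iff[OF f])
  ultimately show "graph_iso V E (K_verts n) (K_adj n)"
    unfolding graph_iso_def K_verts_def by blast
qed

lemma graph_iso_P3_iff:
  assumes "simple_graph V E"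
  shows "graph_iso V E P3_verts P3_adj \<longleftrightarrow>
    (\<exists>a u b. V = {a, u, b} \<and> a \<noteq> b \<and> E u a \<and> E u b \<and> \<not> E a b)"
proof
  assume "graph_iso V E P3_verts P3_adj"
  then obtain f where f: "bij_betw f V {0, 1, 2}" "\<forall>x\<in>V. \<forall>y\<in>V. E x y \<longleftrightarrow> P3_adj (f x) (f y)"
    unfolding graph_iso_def P3_verts_def by blast
  define g where "g = the_inv_into V f"
  have "bij_betw g {0, 1, 2} V" unfolding g_def using f(1) by (rule bij_betw_the_inv_into)
  then have V: "V = {g 0, g 1, g 2}" by (simp add: bij_betw_def)
  have inv: "f (g k) = k" if "k \<in> {0, 1, 2}" for k
    unfolding g_def using f(1) that by (rule f_the_inv_into_f_bij_betw)
  have adj: "E (g i) (g j) \<longleftrightarrow> P3_adj i j" if "i \<in> {0, 1, 2}" "j \<in> {0, 1, 2}" for i j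
  proof -
    have "g i \<in> V" "g j \<in> V" using V that by auto
    then show ?thesis using f(2) inv[OF that(1)] inv[OF that(2)] by simp
  qed
  have "g 0 \<noteq> g 2" using inv[of 0] inv[of 2] by force
  moreover have "E (g 1) (g 0)" "E (g 1) (g 2)" "\<not> E (g 0) (g 2)"
    by (simp_all add: adj P3_adj_def)
  ultimately show "\<exists>a u b. V = {a, u, b} \<and> a \<noteq> b \<and> E u a \<and> E u b \<and> \<not> E a b"
    using V by blast
next
  assume "\<exists>a u b. V = {a, u, b} \<and> a \<noteq> b \<and> E u a \<and> E u b \<and> \<not> E a b"
  then obtain a u b where V: "V = {a, u, b}" and "a \<noteq> b" "E u a" "E u b" "\<not> E a b" by blast
  have "E a u" "E b u" "\<not> E b a" "\<not> E a a" "\<not> E u u" "\<not> E b b"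
    using assms \<open>E u a\<close> \<open>E u b\<close> \<open>\<not> E a b\<close> unfolding simple_graph_def by blast+
  then have "u \<noteq> a" "u \<noteq> b" using \<open>E u a\<close> \<open>E u b\<close> by blast+
  define f where "f x = (if x = a then 0 else if x = u then 1 else 2 :: nat)" for x
  have "bij_betw f V {0, 1, 2}"
    unfolding bij_betw_def inj_on_def f_def V using \<open>a \<noteq> b\<close> \<open>u \<noteq> a\<close> \<open>u \<noteq> b\<close> by auto
  moreover have "E x y \<longleftrightarrow> P3_adj (f x) (f y)" if "x \<in> V" "y \<in> V" for x y
    using that \<open>a \<noteq> b\<close> \<open>u \<noteq> a\<close> \<open>u \<noteq> b\<close> \<open>E u a\<close> \<open>E u b\<close> \<open>\<not> E a b\<close>
      \<open>E a u\<close> \<open>E b u\<close> \<open>\<not> E b a\<close> \<open>\<not> E a a\<close> \<open>\<not> E u u\<close> \<open>\<not> E b b\<close>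
    unfolding V f_def P3_adj_def by auto
  ultimately show "graph_iso V E P3_verts P3_adj" unfolding graph_iso_def P3_verts_def by blast
qed

lemma graph_iso_P3_card: "graph_iso V E P3_verts P3_adj \<Longrightarrow> card V = 3"
  unfolding graph_iso_def P3_verts_def by (auto dest: bij_betw_same_card)

locale Km_product =
  fixes m :: nat and V :: "'a set" and E :: "'a \<Rightarrow> 'a \<Rightarrow> bool"
  assumes two_le_m: "2 \<le> m" and simple: "simple_graph V E" and card_le_m: "card V \<le> m"
begin

abbreviation "KV \<equiv> cart_verts (K_verts m) V"
abbreviation "KE \<equiv> cart_adj (K_verts m) (K_adj m) V E"

lemma finite_V: "finite V"
  and E_sym: "E x y \<Longrightarrow> E y x"
  and E_irrefl: "\<not> E x x"
  and E_in_V: "E x y \<Longrightarrow> x \<in> V \<and> y \<in> V"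
  using simple unfolding simple_graph_def by blast+

lemma mem_KV [simp]: "c \<in> KV \<longleftrightarrow> fst c < m \<and> snd c \<in> V"
  by (cases c) (simp add: cart_verts_def K_verts_def)

lemma KE_iff [simp]:
  "KE (i, x) (j, y) \<longleftrightarrow> (i = j \<and> i < m \<and> E x y) \<or> (x = y \<and> x \<in> V \<and> i < m \<and> j < m \<and> i \<noteq> j)"
  by (auto simp: cart_adj_def K_verts_def K_adj_def)

lemma finite_KV: "finite KV"
  using finite_V by (simp add: cart_verts_def K_verts_def)

lemma dominating_set_row_meets_neighbour:
  assumes "dominating_set KV KE D" and "h \<in> V" and "h \<notin> snd ` D" and "i < m"
  shows "\<exists>y. (i, y) \<in> D \<and> E y h"
proof -
  have "(i, h) \<notin> D" using assms(3) by force
  moreover have "(i, h) \<in> KV" using assms(2,4) by simp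
  ultimately obtain q where "q \<in> D" "KE q (i, h)"
    using assms(1) unfolding dominating_set_def by blast
  moreover from this assms(3) have "snd q \<noteq> h" by force
  ultimately show ?thesis by (cases q) auto
qed

lemma card_V_le_dominating_set:
  assumes D: "dominating_set KV KE D"
  shows "card V \<le> card D"
proof -
  have "finite D" using D finite_KV rev_finite_subset unfolding dominating_set_def by blast
  show ?thesis
  proof (cases "V \<subseteq> snd ` D")
    case True
    then have "card V \<le> card (snd ` D)" using \<open>finite D\<close> by (intro card_mono) auto
    also have "\<dots> \<le> card D" using \<open>finite D\<close> by (rule card_image_le)
    finally show ?thesis .
  next
    case False
    then obtain h where "h \<in> V" "h \<notin> snd ` D" by blast
    then have "{..<m} \<subseteq> fst ` D"
      using dominating_set_row_meets_neighbour[OF D] by force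
    then have "m \<le> card (fst ` D)"
      using \<open>finite D\<close> by (metis card_lessThan card_mono finite_imageI)
    also have "\<dots> \<le> card D" using \<open>finite D\<close> by (rule card_image_le)
    finally show ?thesis using card_le_m by simp
  qed
qed

lemma dominating_set_layer: "dominating_set KV KE ({0} \<times> V)"
  unfolding dominating_set_def
proof (intro conjI ballI)
  show "{0} \<times> V \<subseteq> KV" using two_le_m by auto
  fix c assume "c \<in> KV"
  then obtain i x where "c = (i, x)" "i < m" "x \<in> V" by (cases c) auto
  then show "c \<in> {0} \<times> V \<or> (\<exists>u\<in>{0} \<times> V. KE u c)"
    using two_le_m by (cases "i = 0") auto
qed

lemma well_dominated_iff:
  "well_dominated KV KE \<longleftrightarrow> (\<forall>D. minimal_dominating_set KV KE D \<longrightarrow> card D \<le> card V)"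
proof (intro iffI allI impI)
  fix D assume "well_dominated KV KE" and "minimal_dominating_set KV KE D"
  then have "minimum_dominating_set KV KE D" unfolding well_dominated_def by blast
  then have "card D \<le> card ({0::nat} \<times> V)"
    using dominating_set_layer unfolding minimum_dominating_set_def by blast
  then show "card D \<le> card V" by (simp add: card_cartesian_product)
next
  assume le: "\<forall>D. minimal_dominating_set KV KE D \<longrightarrow> card D \<le> card V"
  show "well_dominated KV KE"
    unfolding well_dominated_def minimum_dominating_set_def
  proof (intro allI impI conjI)
    fix D assume D: "minimal_dominating_set KV KE D"
    then show "dominating_set KV KE D" unfolding minimal_dominating_set_def by blast
    fix D' assume "dominating_set KV KE D'"
    have "card D \<le> card V" using le D by blast
    also have "\<dots> \<le> card D'" using \<open>dominating_set KV KE D'\<close> by (rule card_V_le_dominating_set)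
    finally show "card D \<le> card D'" .
  qed
qed

text \<open>The closed neighbourhood of (i, x) consists of its H-neighbours in row i and its
  whole column.\<close>

lemma not_minimal_dominating_set_if_redundant:
  assumes "dominating_set KV KE D" and "(i, x) \<in> D"
    and "\<And>y. E x y \<Longrightarrow> dominated_by KE (D - {(i, x)}) (i, y)"
    and "\<And>j. j < m \<Longrightarrow> dominated_by KE (D - {(i, x)}) (j, x)"
  shows "\<not> minimal_dominating_set KV KE D"
proof
  assume "minimal_dominating_set KV KE D"
  then obtain c where "private_neighbour KE D (i, x) c"
    using assms(2) unfolding minimal_dominating_set_iff_private_neighbour by blast
  then have "c = (i, x) \<or> KE (i, x) c" and "\<not> dominated_by KE (D - {(i, x)}) c"
    unfolding private_neighbour_def by blast+
  moreover have "i < m" using assms(1,2) unfolding dominating_set_def by auto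
  ultimately show False using assms(3,4) by (cases c) auto
qed

lemma minimal_dominating_set_inj_on_snd:
  assumes D: "minimal_dominating_set KV KE D" and "V \<subseteq> snd ` D"
  shows "inj_on snd D"
proof (rule inj_onI, rule ccontr)
  fix p q assume "p \<in> D" "q \<in> D" "snd p = snd q" "p \<noteq> q"
  then obtain i j x where p: "p = (i, x)" "(i, x) \<in> D" and q: "(j, x) \<in> D" "j \<noteq> i"
    by (metis prod.collapse prod.inject)
  have "D \<subseteq> KV" using D unfolding minimal_dominating_set_def dominating_set_def by blast
  then have "i < m" "j < m" "x \<in> V" using p(2) q(1) by auto
  have "dominated_by KE (D - {(i, x)}) (i, y)" if xy: "E x y" for y
  proof -
    obtain l where "(l, y) \<in> D" using \<open>V \<subseteq> snd ` D\<close> E_in_V[OF xy] by force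
    moreover have "y \<noteq> x" using xy E_irrefl by blast
    moreover have "l < m" using \<open>(l, y) \<in> D\<close> \<open>D \<subseteq> KV\<close> by auto
    ultimately show ?thesis using E_in_V[OF xy] \<open>i < m\<close>
      unfolding dominated_by_def by (cases "l = i") force+
  qed
  moreover have "dominated_by KE (D - {(i, x)}) (k, x)" if "k < m" for k
    using q \<open>j < m\<close> \<open>x \<in> V\<close> that unfolding dominated_by_def by (cases "k = j") force+
  moreover have "dominating_set KV KE D"
    using D unfolding minimal_dominating_set_def by blast
  ultimately show False using D not_minimal_dominating_set_if_redundant p(2) by blast
qed

lemma well_dominated_if_inj_on_fst:
  assumes "card V = m"
    and "\<And>D h. minimal_dominating_set KV KE D \<Longrightarrow> h \<in> V \<Longrightarrow> h \<notin> snd ` D \<Longrightarrow> inj_on fst D"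
  shows "well_dominated KV KE"
  unfolding well_dominated_iff
proof (intro allI impI)
  fix D assume D: "minimal_dominating_set KV KE D"
  then have "D \<subseteq> KV" unfolding minimal_dominating_set_def dominating_set_def by blast
  show "card D \<le> card V"
  proof (cases "V \<subseteq> snd ` D")
    case True
    then have "card D = card (snd ` D)"
      using minimal_dominating_set_inj_on_snd[OF D] by (simp add: card_image)
    also have "\<dots> \<le> card V" using \<open>D \<subseteq> KV\<close> finite_V by (intro card_mono) auto
    finally show ?thesis .
  next
    case False
    then obtain h where "h \<in> V" "h \<notin> snd ` D" by blast
    then have "card D = card (fst ` D)" using assms(2)[OF D] by (simp add: card_image)
    also have "\<dots> \<le> card {..<m}" using \<open>D \<subseteq> KV\<close> by (intro card_mono) auto
    finally show ?thesis using assms(1) by simp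
  qed
qed

lemma inj_on_fst_if_complete:
  assumes complete: "\<forall>x\<in>V. \<forall>y\<in>V. E x y \<longleftrightarrow> x \<noteq> y"
    and D: "minimal_dominating_set KV KE D" and h: "h \<in> V" "h \<notin> snd ` D"
  shows "inj_on fst D"
proof (rule inj_onI, rule ccontr)
  fix p q assume "p \<in> D" "q \<in> D" "fst p = fst q" "p \<noteq> q"
  then obtain i x y where p: "(i, x) \<in> D" and q: "(i, y) \<in> D" "y \<noteq> x"
    by (metis prod.collapse)
  have D_dom: "dominating_set KV KE D" using D unfolding minimal_dominating_set_def by blast
  then have "D \<subseteq> KV" unfolding dominating_set_def by blast
  then have "i < m" "x \<in> V" "y \<in> V" using p q by auto
  have q': "(i, y) \<in> D - {(i, x)}" using q by simp
  have "dominated_by KE (D - {(i, x)}) (i, z)" if "E x z" for z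
  proof (cases "z = y")
    case False
    with complete \<open>y \<in> V\<close> E_in_V[OF that] have "E y z" by blast
    with q' \<open>i < m\<close> show ?thesis by (auto intro: dominated_by_neighbour)
  qed (use q' in \<open>blast intro: dominated_by_self\<close>)
  moreover have "dominated_by KE (D - {(i, x)}) (j, x)" if "j < m" for j
  proof (cases "j = i")
    case True
    with complete \<open>x \<in> V\<close> \<open>y \<in> V\<close> q have "E y x" by blast
    with q' True \<open>i < m\<close> show ?thesis by (auto intro: dominated_by_neighbour)
  next
    case False
    obtain z where z: "(j, z) \<in> D" "E z h"
      using dominating_set_row_meets_neighbour[OF D_dom h \<open>j < m\<close>] by blast
    with False have z': "(j, z) \<in> D - {(i, x)}" by simp
    show ?thesis
    proof (cases "z = x")
      case False
      with complete \<open>x \<in> V\<close> E_in_V[OF \<open>E z h\<close>] have "E z x" by blast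
      with z' \<open>j < m\<close> show ?thesis by (auto intro: dominated_by_neighbour)
    qed (use z' in \<open>blast intro: dominated_by_self\<close>)
  qed
  ultimately show False using not_minimal_dominating_set_if_redundant[OF D_dom p] D by blast
qed

lemma row_unique_if_P3_leaf_column_missing:
  assumes V: "V = {l, u, l'}" and "E u l'" and "\<not> E l l'"
    and D: "minimal_dominating_set KV KE D" and "l \<notin> snd ` D"
    and "(i, x) \<in> D" "(i, y) \<in> D"
  shows "x = y"
proof (rule ccontr)
  assume "x \<noteq> y"
  have D_dom: "dominating_set KV KE D" using D unfolding minimal_dominating_set_def by blast
  then have "D \<subseteq> KV" unfolding dominating_set_def by blast
  then have "i < m" "x \<in> V" "y \<in> V" using assms(6,7) by auto
  have l_nbr: "z = u" if "E z l" for z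
  proof -
    have "z \<in> {l, u, l'}" using E_in_V[OF that] V by blast
    moreover have "z \<noteq> l" "z \<noteq> l'" using that E_irrefl E_sym \<open>\<not> E l l'\<close> by blast+
    ultimately show ?thesis by blast
  qed
  have l'_nbr: "z = u" if "E l' z" for z
  proof -
    have "z \<in> {l, u, l'}" using E_in_V[OF that] V by blast
    moreover have "z \<noteq> l" "z \<noteq> l'" using that E_irrefl E_sym \<open>\<not> E l l'\<close> by blast+
    ultimately show ?thesis by blast
  qed
  have centre: "(j, u) \<in> D" if "j < m" for j
  proof -
    have "l \<in> V" using V by blast
    from dominating_set_row_meets_neighbour[OF D_dom this \<open>l \<notin> snd ` D\<close> that]
    show ?thesis using l_nbr by blast
  qed
  have "x \<noteq> l" "y \<noteq> l" using \<open>l \<notin> snd ` D\<close> assms(6,7) by force+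
  with \<open>x \<in> V\<close> \<open>y \<in> V\<close> \<open>x \<noteq> y\<close> V have "x = l' \<or> y = l'" by blast
  then have l': "(i, l') \<in> D" using assms(6,7) by blast
  have "u \<noteq> l'" using \<open>E u l'\<close> E_irrefl by blast
  have "dominated_by KE (D - {(i, l')}) (i, z)" if "E l' z" for z
    using centre[OF \<open>i < m\<close>] l'_nbr[OF that] \<open>u \<noteq> l'\<close> by (auto intro: dominated_by_self)
  moreover have "dominated_by KE (D - {(i, l')}) (j, l')" if "j < m" for j
    using centre[OF that] that \<open>u \<noteq> l'\<close> \<open>E u l'\<close> by (auto intro: dominated_by_neighbour)
  ultimately show False using not_minimal_dominating_set_if_redundant[OF D_dom l'] D by blast
qed

lemma row_unique_if_P3_centre_column_missing:
  assumes V: "V = {a, u, b}" and "E u a" "E u b" "\<not> E a b"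
    and D: "minimal_dominating_set KV KE D" and "u \<notin> snd ` D"
    and "(i, x) \<in> D" "(i, y) \<in> D"
  shows "x = y"
proof (rule ccontr)
  assume "x \<noteq> y"
  have D_dom: "dominating_set KV KE D" using D unfolding minimal_dominating_set_def by blast
  then have "D \<subseteq> KV" unfolding dominating_set_def by blast
  then have "i < m" "x \<in> V" "y \<in> V" using assms(7,8) by auto
  have leaf_nbr: "w = u" if "z \<in> {a, b}" "E z w" for z w
  proof -
    have "w \<in> {a, u, b}" using E_in_V[OF that(2)] V by blast
    moreover have "w \<noteq> z" using that(2) E_irrefl by blast
    moreover have "\<not> E a b" "\<not> E b a" using \<open>\<not> E a b\<close> E_sym by blast+
    ultimately show ?thesis using that by blast
  qed
  have "x \<noteq> u" "y \<noteq> u" using \<open>u \<notin> snd ` D\<close> assms(7,8) by force+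
  with \<open>x \<in> V\<close> \<open>y \<in> V\<close> V have "x \<in> {a, b}" "y \<in> {a, b}" by blast+
  with \<open>x \<noteq> y\<close> have row_i: "(i, a) \<in> D" "(i, b) \<in> D" "a \<noteq> b" using assms(7,8) by blast+
  define l where "l = (if i = 0 then 1 else 0 :: nat)"
  have "l < m" "l \<noteq> i" using two_le_m unfolding l_def by auto
  have "u \<in> V" using V by blast
  from dominating_set_row_meets_neighbour[OF D_dom this \<open>u \<notin> snd ` D\<close> \<open>l < m\<close>]
  obtain z where z: "(l, z) \<in> D" "E z u" by blast
  then have "z \<in> {a, b}" using E_in_V E_irrefl V by blast
  then obtain z' where z': "z' \<in> {a, b}" "z' \<noteq> z" using \<open>a \<noteq> b\<close> by blast
  then have "(i, z) \<in> D" "(i, z') \<in> D - {(i, z)}" "E z' u"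
    using row_i \<open>z \<in> {a, b}\<close> \<open>E u a\<close> \<open>E u b\<close> E_sym by auto
  have "dominated_by KE (D - {(i, z)}) (i, w)" if "E z w" for w
    using leaf_nbr[OF \<open>z \<in> {a, b}\<close> that] \<open>(i, z') \<in> D - {(i, z)}\<close> \<open>E z' u\<close> \<open>i < m\<close>
    by (auto intro: dominated_by_neighbour)
  moreover have "dominated_by KE (D - {(i, z)}) (j, z)" if "j < m" for j
  proof (cases "j = l")
    case True
    then show ?thesis using z(1) \<open>l \<noteq> i\<close> by (auto intro: dominated_by_self)
  next
    case False
    have "z \<in> V" using E_in_V[OF \<open>E z u\<close>] by blast
    with False z(1) \<open>l \<noteq> i\<close> \<open>l < m\<close> that show ?thesis by (auto intro: dominated_by_neighbour)
  qed
  ultimately show False using not_minimal_dominating_set_if_redundant[OF D_dom \<open>(i, z) \<in> D\<close>] D by blast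
qed

lemma inj_on_fst_if_P3:
  assumes V: "V = {a, u, b}" and "E u a" "E u b" "\<not> E a b"
    and D: "minimal_dominating_set KV KE D" and "h \<in> V" "h \<notin> snd ` D"
  shows "inj_on fst D"
proof (rule inj_onI, rule ccontr)
  fix p q assume "p \<in> D" "q \<in> D" "fst p = fst q" "p \<noteq> q"
  then obtain i x y where "(i, x) \<in> D" "(i, y) \<in> D" "x \<noteq> y"
    by (metis prod.collapse)
  moreover have "V = {b, u, a}" "\<not> E b a" using V \<open>\<not> E a b\<close> E_sym by blast+
  moreover consider "h = u" | "h = a" | "h = b" using \<open>h \<in> V\<close> V by blast
  ultimately show False
    using row_unique_if_P3_centre_column_missing[OF V \<open>E u a\<close> \<open>E u b\<close> \<open>\<not> E a b\<close> D]
      row_unique_if_P3_leaf_column_missing[OF V \<open>E u b\<close> \<open>\<not> E a b\<close> D]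
      row_unique_if_P3_leaf_column_missing[of b u a, OF _ \<open>E u a\<close> _ D] \<open>h \<notin> snd ` D\<close>
    by metis
qed

lemma minimal_dominating_set_layers:
  assumes S: "dominating_set V E S" and epn: "\<forall>s\<in>S. \<exists>e\<in>V - S. private_neighbour E S s e"
  shows "minimal_dominating_set KV KE ({..<m} \<times> S)"
  unfolding minimal_dominating_set_iff_private_neighbour
proof (intro conjI ballI)
  show "dominating_set KV KE ({..<m} \<times> S)"
    unfolding dominating_set_iff_dominated_by
  proof (intro conjI ballI)
    show "{..<m} \<times> S \<subseteq> KV" using S unfolding dominating_set_def by auto
    fix c assume "c \<in> KV"
    then obtain i x where c: "c = (i, x)" "i < m" "x \<in> V" by (cases c) auto
    then obtain s where "s \<in> S" "s = x \<or> E s x" using S unfolding dominating_set_def by blast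
    then show "dominated_by KE ({..<m} \<times> S) c"
      using c by (auto intro: dominated_by_self dominated_by_neighbour)
  qed
  fix p assume "p \<in> {..<m} \<times> S"
  then obtain i s where p: "p = (i, s)" "i < m" "s \<in> S" by blast
  with epn obtain e where e: "e \<in> V" "e \<notin> S" "private_neighbour E S s e" by blast
  then have "E s e" and not_dom: "\<not> dominated_by E (S - {s}) e"
    using p(3) unfolding private_neighbour_def by auto
  have "private_neighbour KE ({..<m} \<times> S) p (i, e)"
    unfolding private_neighbour_def dominated_by_def
  proof (intro conjI notI)
    show "(i, e) = p \<or> KE p (i, e)" using p \<open>E s e\<close> by simp
    assume "(i, e) \<in> {..<m} \<times> S - {p} \<or> (\<exists>q\<in>{..<m} \<times> S - {p}. KE q (i, e))"
    then obtain q where q: "q \<in> {..<m} \<times> S - {p}" "KE q (i, e)" using e(2) by blast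
    obtain j t where "q = (j, t)" by (cases q)
    with q p e(2) have "t \<in> S - {s}" "E t e" by auto
    with not_dom show False by (auto intro: dominated_by_neighbour)
  qed
  then show "\<exists>c\<in>KV. private_neighbour KE ({..<m} \<times> S) p c" using p e(1) by force
qed

lemma well_dominated_imp_universal_vertex:
  assumes wd: "well_dominated KV KE" and "V \<noteq> {}" and "\<forall>v\<in>V. \<exists>w. E v w"
  shows "card V = m \<and> (\<exists>u\<in>V. \<forall>v\<in>V. v \<noteq> u \<longrightarrow> E u v)"
proof -
  obtain S where S: "dominating_set V E S" and "\<forall>s\<in>S. \<exists>e\<in>V - S. private_neighbour E S s e"
    using ex_dominating_set_external_private_neighbours[OF simple assms(3)] by blast
  then have "card ({..<m} \<times> S) \<le> card V"
    using wd minimal_dominating_set_layers unfolding well_dominated_iff by blast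
  then have "m * card S \<le> m * 1"
    using card_le_m by (metis card_cartesian_product card_lessThan le_trans mult_1_right)
  then have "card S \<le> 1" using two_le_m by simp
  moreover have "S \<noteq> {}" using S \<open>V \<noteq> {}\<close> unfolding dominating_set_def by blast
  moreover have "finite S" using S finite_V rev_finite_subset unfolding dominating_set_def by blast
  ultimately have "card S = 1" by (simp add: card_gt_0_iff le_Suc_eq)
  then obtain u where "S = {u}" by (rule card_1_singletonE)
  then have "card V = m" "u \<in> V" "\<forall>v\<in>V. v \<noteq> u \<longrightarrow> E u v"
    using S \<open>card ({..<m} \<times> S) \<le> card V\<close> card_le_m unfolding dominating_set_def by auto
  then show ?thesis by blast
qed

lemma dominating_set_nonadjacent_pair:
  assumes u: "u \<in> V" "\<forall>v\<in>V. v \<noteq> u \<longrightarrow> E u v"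
    and ab: "a \<in> V" "b \<in> V" "a \<noteq> b" "\<not> E a b"
    and g: "g ` {1..<m} = V - {a, b, u}"
  defines "D \<equiv> insert (0, a) (insert (0, b) ((\<lambda>j. (j, g j)) ` {1..<m}))"
  shows "dominating_set KV KE D"
  unfolding dominating_set_iff_dominated_by
proof (intro conjI ballI)
  have "a \<noteq> u" using u ab by metis
  then have "E a u" using u ab E_sym by blast
  have g_in: "g j \<in> V - {a, b, u}" if "j \<in> {1..<m}" for j
    using g that by blast
  have mem_D: "(j, y) \<in> D \<longleftrightarrow> j = 0 \<and> (y = a \<or> y = b) \<or> j \<in> {1..<m} \<and> y = g j" for j y
    unfolding D_def by auto
  show "D \<subseteq> KV" using ab g_in two_le_m unfolding D_def by auto
  fix c assume "c \<in> KV"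
  then obtain i x where c: "c = (i, x)" "i < m" "x \<in> V" by (cases c) auto
  consider "x = a \<or> x = b" | "x = u" | "x \<in> g ` {1..<m}" using c g by blast
  then show "dominated_by KE D c"
  proof cases
    case 1
    then show ?thesis using c mem_D
      by (cases "i = 0") (auto intro: dominated_by_self dominated_by_neighbour[of "(0, x)"])
  next
    case 2
    have "E (g i) u" if "i \<in> {1..<m}" using g_in[OF that] u E_sym by blast
    with 2 show ?thesis using c mem_D \<open>E a u\<close>
      by (cases "i = 0") (auto intro: dominated_by_neighbour[of "(0, a)"] dominated_by_neighbour[of "(i, g i)"])
  next
    case 3
    then obtain j where "j \<in> {1..<m}" "x = g j" by blast
    then show ?thesis using c mem_D
      by (cases "i = j") (auto intro: dominated_by_self dominated_by_neighbour[of "(j, x)"])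
  qed
qed

lemma minimal_dominating_set_nonadjacent_pair:
  assumes u: "u \<in> V" "\<forall>v\<in>V. v \<noteq> u \<longrightarrow> E u v"
    and ab: "a \<in> V" "b \<in> V" "a \<noteq> b" "\<not> E a b"
    and g: "g ` {1..<m} = V - {a, b, u}"
  defines "D \<equiv> insert (0, a) (insert (0, b) ((\<lambda>j. (j, g j)) ` {1..<m}))"
  shows "minimal_dominating_set KV KE D"
  unfolding minimal_dominating_set_iff_private_neighbour
proof (intro conjI ballI)
  show "dominating_set KV KE D"
    unfolding D_def using u ab g by (rule dominating_set_nonadjacent_pair)
  have "a \<noteq> u" using u ab by metis
  moreover have "b \<noteq> u" using u ab E_sym by metis
  ultimately have u_notin: "(j, u) \<notin> D" if "j \<in> {1..<m}" for j
    using that g unfolding D_def by auto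
  have leaf_private: "private_neighbour KE D (0, x) (0, x)" if "x \<in> {a, b}" for x
  proof -
    have "\<not> KE q (0, x)" if "q \<in> D - {(0, x)}" for q
    proof -
      from that \<open>x \<in> {a, b}\<close> consider "q = (0, a)" "x = b" | "q = (0, b)" "x = a"
        | j where "q = (j, g j)" "j \<noteq> 0" "g j \<notin> {a, b}"
        unfolding D_def using g by fastforce
      then show ?thesis using ab E_sym \<open>x \<in> {a, b}\<close> by cases auto
    qed
    then show ?thesis unfolding private_neighbour_def dominated_by_def by blast
  qed
  have centre_private: "private_neighbour KE D (j, g j) (j, u)" if "j \<in> {1..<m}" for j
  proof -
    have "g j \<in> V" "g j \<noteq> u" using g that by blast+
    then have "E (g j) u" using u E_sym by blast
    moreover have "\<not> KE q (j, u)" if "q \<in> D - {(j, g j)}" for q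
    proof -
      from that consider "q = (0, a)" | "q = (0, b)" | k where "q = (k, g k)" "k \<noteq> j" "g k \<noteq> u"
        unfolding D_def using g by fastforce
      then show ?thesis using \<open>a \<noteq> u\<close> \<open>b \<noteq> u\<close> \<open>j \<in> {1..<m}\<close> by cases auto
    qed
    ultimately show ?thesis
      using that u_notin[OF that] unfolding private_neighbour_def dominated_by_def by auto
  qed
  fix p assume "p \<in> D"
  then consider x where "x \<in> {a, b}" "p = (0, x)" | j where "j \<in> {1..<m}" "p = (j, g j)"
    unfolding D_def by blast
  then show "\<exists>c\<in>KV. private_neighbour KE D p c"
  proof cases
    case 1
    then show ?thesis using leaf_private ab two_le_m by force
  next
    case 2
    then show ?thesis using centre_private u by force
  qed
qed

lemma not_well_dominated_if_nonadjacent_pair: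
  assumes u: "u \<in> V" "\<forall>v\<in>V. v \<noteq> u \<longrightarrow> E u v"
    and ab: "a \<in> V" "b \<in> V" "a \<noteq> b" "\<not> E a b" and "4 \<le> card V"
  shows "\<not> well_dominated KV KE"
proof -
  define W where "W = V - {a, b, u}"
  have "card {a, b, u} \<le> 3" by (auto simp: card_insert_if)
  then have "W \<noteq> {}"
    using \<open>4 \<le> card V\<close> card_mono[of "{a, b, u}" V] unfolding W_def by auto
  have "W \<subset> V" using ab(1) unfolding W_def by blast
  with finite_V have "card W < card V" by (rule psubset_card_mono)
  with card_le_m have "card W < m" by linarith
  have "finite W" using finite_V unfolding W_def by blast
  with \<open>W \<noteq> {}\<close> \<open>card W < m\<close> obtain g where g: "g ` {1..<m} = W"
    using ex_image_atLeastLessThan_eq by blast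
  let ?D = "insert (0, a) (insert (0, b) ((\<lambda>j. (j, g j)) ` {1..<m}))"
  have "minimal_dominating_set KV KE ?D"
    using minimal_dominating_set_nonadjacent_pair[OF u ab] g unfolding W_def by blast
  moreover have "card ((\<lambda>j. (j, g j)) ` {1..<m}) = m - 1"
    by (subst card_image) (auto simp: inj_on_def)
  then have "card ?D = m + 1" using ab(3) two_le_m by (auto simp: card_insert_if)
  ultimately show ?thesis using card_le_m unfolding well_dominated_iff by fastforce
qed

lemma well_dominated_iff_complete_or_P3:
  assumes "V \<noteq> {}" and "\<forall>v\<in>V. \<exists>w. E v w"
  shows "well_dominated KV KE \<longleftrightarrow> card V = m \<and>
    ((\<forall>x\<in>V. \<forall>y\<in>V. E x y \<longleftrightarrow> x \<noteq> y) \<or> (\<exists>a u b. V = {a, u, b} \<and> a \<noteq> b \<and> E u a \<and> E u b \<and> \<not> E a b))"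
proof
  assume wd: "well_dominated KV KE"
  then obtain u where "card V = m" "u \<in> V" and univ: "\<forall>v\<in>V. v \<noteq> u \<longrightarrow> E u v"
    using well_dominated_imp_universal_vertex[OF wd assms] by blast
  show "card V = m \<and> ((\<forall>x\<in>V. \<forall>y\<in>V. E x y \<longleftrightarrow> x \<noteq> y) \<or>
    (\<exists>a u b. V = {a, u, b} \<and> a \<noteq> b \<and> E u a \<and> E u b \<and> \<not> E a b))"
  proof (cases "\<forall>x\<in>V. \<forall>y\<in>V. E x y \<longleftrightarrow> x \<noteq> y")
    case False
    then obtain a b where ab: "a \<in> V" "b \<in> V" "a \<noteq> b" "\<not> E a b" using E_irrefl by blast
    then have "a \<noteq> u" "b \<noteq> u" using univ E_sym by metis+
    have "\<not> 4 \<le> card V"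
      using not_well_dominated_if_nonadjacent_pair[OF \<open>u \<in> V\<close> univ ab] wd by blast
    moreover have "{a, u, b} \<subseteq> V" "card {a, u, b} = 3"
      using ab \<open>u \<in> V\<close> \<open>a \<noteq> u\<close> \<open>b \<noteq> u\<close> by auto
    moreover from finite_V \<open>{a, u, b} \<subseteq> V\<close> have "card {a, u, b} \<le> card V" by (rule card_mono)
    ultimately have "card {a, u, b} = card V" by linarith
    with finite_V \<open>{a, u, b} \<subseteq> V\<close> have "V = {a, u, b}" by (metis card_subset_eq)
    then show ?thesis using \<open>card V = m\<close> ab univ \<open>a \<noteq> u\<close> \<open>b \<noteq> u\<close> by blast
  qed (use \<open>card V = m\<close> in blast)
next
  assume H: "card V = m \<and> ((\<forall>x\<in>V. \<forall>y\<in>V. E x y \<longleftrightarrow> x \<noteq> y) \<or>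
    (\<exists>a u b. V = {a, u, b} \<and> a \<noteq> b \<and> E u a \<and> E u b \<and> \<not> E a b))"
  show "well_dominated KV KE"
  proof (rule well_dominated_if_inj_on_fst)
    show "card V = m" using H by blast
    fix D h assume "minimal_dominating_set KV KE D" "h \<in> V" "h \<notin> snd ` D"
    with H show "inj_on fst D" using inj_on_fst_if_complete inj_on_fst_if_P3 by metis
  qed
qed

end

theorem proposition21:
  fixes m :: nat and V :: "'a set" and E :: "'a \<Rightarrow> 'a \<Rightarrow> bool"
  assumes "m \<ge> 2"
    and "simple_graph V E" and "connected_graph V E"
    and "card V \<ge> 2" and "card V \<le> m"
  shows "well_dominated (cart_verts (K_verts m) V) (cart_adj (K_verts m) (K_adj m) V E)
    \<longleftrightarrow> (m = 2 \<and> graph_iso V E (K_verts 2) (K_adj 2))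
      \<or> (m = 3 \<and> (graph_iso V E (K_verts 3) (K_adj 3) \<or> graph_iso V E P3_verts P3_adj))
      \<or> (m \<ge> 4 \<and> graph_iso V E (K_verts m) (K_adj m))"
proof -
  interpret Km_product m V E using assms(1,2,5) by unfold_locales
  have "V \<noteq> {}" using assms(4) by auto
  have "\<forall>v\<in>V. \<exists>w. E v w" using connected_graph_no_isolated_vertex[OF assms(3,4)] by blast
  have wd_iff: "well_dominated KV KE \<longleftrightarrow>
      card V = m \<and> (graph_iso V E (K_verts m) (K_adj m) \<or> graph_iso V E P3_verts P3_adj)"
    unfolding well_dominated_iff_complete_or_P3[OF \<open>V \<noteq> {}\<close> \<open>\<forall>v\<in>V. \<exists>w. E v w\<close>]
      graph_iso_K_iff[OF finite_V] graph_iso_P3_iff[OF simple] by blast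
  have K_card: "card V = n" if "graph_iso V E (K_verts n) (K_adj n)" for n
    using that graph_iso_K_iff[OF finite_V] by blast
  consider "m = 2" | "m = 3" | "4 \<le> m" using assms(1) by linarith
  then show ?thesis using wd_iff K_card graph_iso_P3_card by cases force+
qed

end
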